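(* Let $\mathcal{L}$ be a complex filiform Lie algebra of dimension $n\ge3$ with a basis $\{e_1,\dots,e_n\}$ such that $[e_1,e_i]=e_{i+1}$ for all $2\le i\le n-1$ and $\{e_{k+2},\dots,e_n\}$ is a basis of $\mathcal{L}^k$ for $1\le k\le n-2$. Define the linear map $\Delta:\mathcal{L}\to\mathcal{L}$ by $\Delta(x)=x+x_3e_n$ for $x=\sum_{k=1}^n x_ke_k$. Then $\Delta$ is a local automorphism of $\mathcal{L}$ which is not an automorphism.
   Context: For a Lie algebra $\mathcal{L}$, $\mathcal{L}^0=\mathcal{L}$, $\mathcal{L}^k=[\mathcal{L}^{k-1},\mathcal{L}]$; an $n$-dimensional nilpotent Lie algebra is filiform if $\dim\mathcal{L}^k=n-k-1$ for $1\le k\le n-1$. (Other brackets among basis elements besides $[e_1,e_i]=e_{i+1}$ may be nonzero.) An automorphism is an invertible linear map $\Phi$ with $\Phi([x,y])=[\Phi(x),\Phi(y)]$ for all $x,y$; a linear map $\Delta$ is a local automorphism if for every $x\in\mathcal{L}$ there is an automorphism $\Phi_x$ with $\Phi_x(x)=\Delta(x)$. *)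

theory Defs
  imports Complex_Main
begin

definition lie_algebra :: "(complex \<Rightarrow> 'v::ab_group_add \<Rightarrow> 'v) \<Rightarrow> ('v \<Rightarrow> 'v \<Rightarrow> 'v) \<Rightarrow> bool" where
  "lie_algebra scale br \<longleftrightarrow>
     vector_space scale \<and>
     (\<forall>y. Vector_Spaces.linear scale scale (\<lambda>x. br x y)) \<and>
     (\<forall>x. Vector_Spaces.linear scale scale (br x)) \<and>
     (\<forall>x. br x x = 0) \<and>
     (\<forall>x y z. br x (br y z) + br y (br z x) + br z (br x y) = 0)"

fun lcs :: "(complex \<Rightarrow> 'v::ab_group_add \<Rightarrow> 'v) \<Rightarrow> ('v \<Rightarrow> 'v \<Rightarrow> 'v) \<Rightarrow> nat \<Rightarrow> 'v set" where
  "lcs scale br 0 = UNIV"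
| "lcs scale br (Suc k) = module.span scale {br x y | x y. x \<in> lcs scale br k}"

definition filiform :: "(complex \<Rightarrow> 'v::ab_group_add \<Rightarrow> 'v) \<Rightarrow> ('v \<Rightarrow> 'v \<Rightarrow> 'v) \<Rightarrow> nat \<Rightarrow> bool" where
  "filiform scale br n \<longleftrightarrow>
     lie_algebra scale br \<and>
     vector_space.dim scale (UNIV :: 'v set) = n \<and>
     (\<exists>k. lcs scale br k = {0}) \<and>
     (\<forall>k. 1 \<le> k \<and> k \<le> n - 1 \<longrightarrow> vector_space.dim scale (lcs scale br k) = n - k - 1)"

definition lie_automorphism :: "(complex \<Rightarrow> 'v::ab_group_add \<Rightarrow> 'v) \<Rightarrow> ('v \<Rightarrow> 'v \<Rightarrow> 'v) \<Rightarrow> ('v \<Rightarrow> 'v) \<Rightarrow> bool" where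
  "lie_automorphism scale br \<Phi> \<longleftrightarrow>
     Vector_Spaces.linear scale scale \<Phi> \<and> bij \<Phi> \<and> (\<forall>x y. \<Phi> (br x y) = br (\<Phi> x) (\<Phi> y))"

definition local_automorphism :: "(complex \<Rightarrow> 'v::ab_group_add \<Rightarrow> 'v) \<Rightarrow> ('v \<Rightarrow> 'v \<Rightarrow> 'v) \<Rightarrow> ('v \<Rightarrow> 'v) \<Rightarrow> bool" where
  "local_automorphism scale br \<Delta> \<longleftrightarrow>
     Vector_Spaces.linear scale scale \<Delta> \<and> (\<forall>x. \<exists>\<Phi>. lie_automorphism scale br \<Phi> \<and> \<Phi> x = \<Delta> x)"

end

theory Submission
  imports Defs
begin

text \<open>Write x = x1 e1 + x2 e2 + w with w in L^1. Since e_n is central and brackets have no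
  e1- or e2-component, every map y \<mapsto> y + (a y1 + b y2) e_n is an automorphism; taking
  a = x3/x1 or b = x3/x2 it agrees with \<Delta> at x whenever x1 \<noteq> 0 or x2 \<noteq> 0. If x1 = x2 = 0,
  then \<Delta> agrees at x with \<psi>(y) = y + y2 e_(n-1) + y3 e_n, which is an automorphism because
  the e3-coordinate of [y, z] is y1 z2 - y2 z1 while [e_(n-1), z] = -z1 e_n + z2 [e_(n-1), e2].
  Finally \<Delta> itself is no automorphism, since it fixes e1 and e2 but moves e3 = [e1, e2].\<close>

locale complex_lie_algebra =
  fixes scale :: "complex \<Rightarrow> 'v::ab_group_add \<Rightarrow> 'v"
    and br :: "'v \<Rightarrow> 'v \<Rightarrow> 'v"
  assumes lie_algebra: "lie_algebra scale br"
begin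

sublocale vector_space scale
  using lie_algebra by (simp add: lie_algebra_def)

lemma bracket_add_left: "br (x + y) z = br x z + br y z"
  and bracket_scale_left: "br (scale c x) z = scale c (br x z)"
  using lie_algebra unfolding lie_algebra_def Vector_Spaces.linear_iff by blast+

lemma bracket_add_right: "br z (x + y) = br z x + br z y"
  and bracket_scale_right: "br z (scale c x) = scale c (br z x)"
  using lie_algebra unfolding lie_algebra_def Vector_Spaces.linear_iff by blast+

lemma bracket_self [simp]: "br x x = 0"
  and jacobi: "br x (br y z) + br y (br z x) + br z (br x y) = 0"
  using lie_algebra by (simp_all add: lie_algebra_def)

lemma bracket_zero_left [simp]: "br 0 z = 0"
  using bracket_add_left[of 0 0 z] by simp

lemma bracket_zero_right [simp]: "br z 0 = 0"
  using bracket_add_right[of z 0 0] by simp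

lemma bracket_antisym: "br x y = - br y x"
proof -
  have "0 = br (x + y) (x + y)" by simp
  also have "\<dots> = br x x + br y x + (br x y + br y y)"
    by (simp only: bracket_add_left bracket_add_right)
  finally show ?thesis by (simp add: eq_neg_iff_add_eq_0 add.commute)
qed

lemma bracket_neg_right: "br z (- x) = - br z x"
  using bracket_add_right[of z x "- x"] by (simp add: add_eq_0_iff2)

lemma bracket_eq_0_commute: "br x y = 0 \<longleftrightarrow> br y x = 0"
  using bracket_antisym[of x y] by simp

lemmas bracket_bilinear =
  bracket_add_left bracket_add_right bracket_scale_left bracket_scale_right

lemma lcs_subspace: "subspace (lcs scale br k)"
  by (cases k) auto

lemma bracket_in_lcs_Suc_left: "x \<in> lcs scale br k \<Longrightarrow> br x y \<in> lcs scale br (Suc k)"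
  by (auto intro: span_base)

lemma bracket_in_lcs_Suc_right: "x \<in> lcs scale br k \<Longrightarrow> br y x \<in> lcs scale br (Suc k)"
  using bracket_in_lcs_Suc_left[of x k y] lcs_subspace[of "Suc k"]
  by (metis bracket_antisym subspace_neg)

lemma bracket_eq_0_if_lcs_Suc_trivial:
  assumes "lcs scale br (Suc k) = {0}" and "x \<in> lcs scale br k"
  shows "br x y = 0" and "br y x = 0"
  using assms bracket_in_lcs_Suc_left[of x k] bracket_in_lcs_Suc_right[of x k] by auto

lemma bracket_lcs1_eq_0_if_ad_central:
  assumes central: "\<And>y z. br (br u y) z = 0" and w: "w \<in> lcs scale br 1"
  shows "br u w = 0"
proof -
  have "w \<in> span {br x y | x y. x \<in> lcs scale br 0}" using w by simp
  then show ?thesis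
  proof (induction rule: span_induct)
    case base
    show ?case unfolding subspace_def by (simp add: bracket_add_right bracket_scale_right)
  next
    case (step w)
    then obtain a b where "w = br a b" by auto
    moreover have "br u (br a b) = - br a (br b u) - br b (br u a)"
      using jacobi[of u a b] by (simp add: eq_neg_iff_add_eq_0 algebra_simps)
    moreover have "br a (br b u) = 0" "br b (br u a) = 0"
      using central bracket_antisym[of b u] bracket_eq_0_commute by (auto simp: bracket_neg_right)
    ultimately show ?case by simp
  qed
qed

lemma linear_plus_scale_functional:
  assumes "Vector_Spaces.linear scale scale g" and "Vector_Spaces.linear scale (*) f"
  shows "Vector_Spaces.linear scale scale (\<lambda>x. g x + scale (f x) z)"
proof -
  interpret vector_space_pair scale scale ..
  show ?thesis using assms by (intro linear_compose_add linear_compose_scale)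
qed

lemma lie_automorphism_central_transvection:
  assumes f: "Vector_Spaces.linear scale (*) f" and fz: "f z = 0"
    and central: "\<And>y. br z y = 0" and f_bracket: "\<And>x y. f (br x y) = 0"
  shows "lie_automorphism scale br (\<lambda>x. x + scale (f x) z)"
proof -
  let ?T = "\<lambda>x. x + scale (f x) z"
  have f_add: "f (x + y) = f x + f y" and f_scale: "f (scale c x) = c * f x" for x y c
    using f unfolding Vector_Spaces.linear_iff by auto
  have f_shift: "f (x + scale c z) = f x" for x c
    using f_add[of x "scale c z"] f_scale[of c z] fz by simp
  have f_unshift: "f (x - scale c z) = f x" for x c
    using f_shift[of x "- c"] by simp
  have "(\<lambda>x. x - scale (f x) z) \<circ> ?T = id" "?T \<circ> (\<lambda>x. x - scale (f x) z) = id"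
    by (simp_all add: fun_eq_iff f_shift f_unshift)
  then have "bij ?T" by (rule o_bij)
  moreover have "?T (br x y) = br (?T x) (?T y)" for x y
    using central bracket_eq_0_commute by (simp add: f_bracket bracket_bilinear)
  ultimately show ?thesis
    by (simp add: lie_automorphism_def linear_plus_scale_functional[OF linear_ident f])
qed

end

locale filiform_adapted_basis =
  fixes scale :: "complex \<Rightarrow> 'v::ab_group_add \<Rightarrow> 'v"
    and br :: "'v \<Rightarrow> 'v \<Rightarrow> 'v"
    and e :: "nat \<Rightarrow> 'v"
    and n :: nat
  assumes filiform: "filiform scale br n"
    and n_ge_3: "n \<ge> 3"
    and e_inj: "inj_on e {1..n}"
    and e_independent: "\<not> module.dependent scale (e ` {1..n})"
    and e_spans: "module.span scale (e ` {1..n}) = UNIV"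
    and bracket_e1: "\<And>i. 2 \<le> i \<Longrightarrow> i \<le> n - 1 \<Longrightarrow> br (e 1) (e i) = e (i + 1)"
    and lcs_basis: "\<And>k. 1 \<le> k \<Longrightarrow> k \<le> n - 2 \<Longrightarrow>
                       \<not> module.dependent scale (e ` {k + 2..n}) \<and>
                       module.span scale (e ` {k + 2..n}) = lcs scale br k"
begin

sublocale complex_lie_algebra scale br
  using filiform by unfold_locales (simp add: filiform_def)

interpretation finite_dimensional_vector_space scale "e ` {1..n}"
  using e_independent e_spans by unfold_locales auto

definition coord :: "nat \<Rightarrow> 'v \<Rightarrow> complex" where
  "coord i x = representation (e ` {1..n}) x (e i)"

lemma linear_coord: "Vector_Spaces.linear scale (*) (coord i)"
  unfolding coord_def using e_independent e_spans by (intro linear_representation) auto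

lemma coord_add: "coord i (x + y) = coord i x + coord i y"
  and coord_scale: "coord i (scale c x) = c * coord i x"
  using linear_coord[of i] unfolding Vector_Spaces.linear_iff by auto

lemma coord_zero [simp]: "coord i 0 = 0"
  by (simp add: coord_def representation_zero)

lemma coord_e: "i \<in> {1..n} \<Longrightarrow> j \<in> {1..n} \<Longrightarrow> coord i (e j) = (if i = j then 1 else 0)"
  unfolding coord_def using representation_basis[of "e ` {1..n}" "e j"] e_independent e_inj
  by (auto simp: inj_on_eq_iff)

lemma coord_lcs_eq_0:
  assumes v: "v \<in> lcs scale br k" and k: "1 \<le> k" "k \<le> n - 2" and j: "1 \<le> j" "j < k + 2"
  shows "coord j v = 0"
proof -
  let ?S = "e ` {k + 2..n}"
  have S: "independent ?S" "span ?S = lcs scale br k" using lcs_basis[OF k] by auto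
  have "representation (e ` {1..n}) v = representation ?S v"
    using e_independent v S k by (intro representation_extend) auto
  moreover have "e j \<notin> ?S"
    using e_inj j k by (auto simp: inj_on_eq_iff)
  ultimately show ?thesis unfolding coord_def using representation_ne_zero[of ?S v "e j"] by auto
qed

lemma lcs_n_minus_1: "lcs scale br (n - 1) = {0}"
proof -
  have "dim (lcs scale br (n - 1)) = 0"
    using filiform n_ge_3 unfolding filiform_def by auto
  then show ?thesis
    using lcs_subspace subspace_0 by auto
qed

lemma e_in_lcs:
  assumes "2 \<le> i" "i \<le> n"
  shows "e i \<in> lcs scale br (i - 2)"
proof (cases "i = 2")
  case False
  then have "e i \<in> span (e ` {(i - 2) + 2..n})"
    using assms by (intro span_base) auto
  then show ?thesis using lcs_basis[of "i - 2"] assms False by simp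
qed simp

lemma e_n_central: "br (e n) y = 0" "br y (e n) = 0"
  using bracket_eq_0_if_lcs_Suc_trivial[of "n - 2" "e n"] e_in_lcs[of n] lcs_n_minus_1 n_ge_3
  by (simp_all add: Suc_diff_Suc numeral_2_eq_2)

lemma coord_bracket_eq_0: "i \<in> {1, 2} \<Longrightarrow> coord i (br y z) = 0"
  using coord_lcs_eq_0[of "br y z" 1 i] bracket_in_lcs_Suc_left[of y 0 z] n_ge_3 by auto

lemma coord3_lcs2:
  assumes "v \<in> lcs scale br 2"
  shows "coord 3 v = 0"
proof (cases "n = 3")
  case True
  then have "v = 0" using assms lcs_n_minus_1 by simp
  then show ?thesis by simp
next
  case False
  then show ?thesis using assms coord_lcs_eq_0[of v 2 3] n_ge_3 by simp
qed

lemma minus_head_in_lcs1: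
  "y - (scale (coord 1 y) (e 1) + scale (coord 2 y) (e 2)) \<in> lcs scale br 1"
proof -
  have "y = (\<Sum>i\<in>{1..n}. scale (coord i y) (e i))"
    using sum_representation_eq[of "e ` {1..n}" y "e ` {1..n}"] e_independent e_spans e_inj
    by (simp add: coord_def sum.reindex)
  also have "\<dots> = scale (coord 1 y) (e 1) + scale (coord 2 y) (e 2)
      + (\<Sum>i\<in>{3..n}. scale (coord i y) (e i))"
  proof -
    have "{1..n} = {1, 2} \<union> {3..n}" using n_ge_3 by auto
    then show ?thesis by (simp add: sum.union_disjoint)
  qed
  finally have "y - (scale (coord 1 y) (e 1) + scale (coord 2 y) (e 2))
      = (\<Sum>i\<in>{3..n}. scale (coord i y) (e i))"
    by (simp add: algebra_simps)
  also have "\<dots> \<in> span (e ` {1 + 2..n})"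
    by (intro span_sum span_scale span_base) auto
  finally show ?thesis using lcs_basis[of 1] n_ge_3 by simp
qed

lemma bracket_e1_e2: "br (e 1) (e 2) = e 3"
  using bracket_e1[of 2] n_ge_3 by simp

lemma bracket_span_e1_e2:
  "br (scale a (e 1) + scale b (e 2)) (scale a' (e 1) + scale b' (e 2)) = scale (a * b' - b * a') (e 3)"
proof -
  have "br (e 1) (e 2) = e 3" "br (e 2) (e 1) = - e 3"
    using bracket_e1_e2 bracket_antisym[of "e 2" "e 1"] by simp_all
  then show ?thesis
    by (simp add: bracket_bilinear algebra_simps)
qed

lemma coord3_bracket: "coord 3 (br y z) = coord 1 y * coord 2 z - coord 2 y * coord 1 z"
proof -
  define hy where "hy = scale (coord 1 y) (e 1) + scale (coord 2 y) (e 2)"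
  define hz where "hz = scale (coord 1 z) (e 1) + scale (coord 2 z) (e 2)"
  define r where "r = br (y - hy) z + br hy (z - hz)"
  have "br y z = br hy z + br (y - hy) z"
    using bracket_add_left[of hy "y - hy" z] by simp
  also have "br hy z = br hy hz + br hy (z - hz)"
    using bracket_add_right[of hy hz "z - hz"] by simp
  finally have "br y z = br hy hz + r"
    unfolding r_def by (simp add: ac_simps)
  moreover have "r \<in> lcs scale br 2"
    using minus_head_in_lcs1[of y] minus_head_in_lcs1[of z] lcs_subspace[of 2]
    unfolding r_def hy_def hz_def numeral_2_eq_2
    by (intro subspace_add bracket_in_lcs_Suc_left bracket_in_lcs_Suc_right) auto
  moreover have "coord 3 (br hy hz) = coord 1 y * coord 2 z - coord 2 y * coord 1 z"
    unfolding hy_def hz_def bracket_span_e1_e2 using coord_e[of 3 3] n_ge_3 by (simp add: coord_scale)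
  ultimately show ?thesis
    by (simp add: coord_add coord3_lcs2)
qed

lemma bracket_e_n_minus_1:
  "br (e (n - 1)) z = scale (- coord 1 z) (e n) + scale (coord 2 z) (br (e (n - 1)) (e 2))"
proof -
  let ?u = "e (n - 1)"
  define hz where "hz = scale (coord 1 z) (e 1) + scale (coord 2 z) (e 2)"
  have "br ?u y \<in> lcs scale br (n - 2)" for y
    using bracket_in_lcs_Suc_left[OF e_in_lcs[of "n - 1"]] n_ge_3
    by (simp add: Suc_diff_Suc numeral_2_eq_2 numeral_3_eq_3)
  then have "br (br ?u y) w = 0" for y w
    using bracket_eq_0_if_lcs_Suc_trivial[of "n - 2"] lcs_n_minus_1 n_ge_3
    by (simp add: Suc_diff_Suc numeral_2_eq_2)
  then have "br ?u (z - hz) = 0"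
    using minus_head_in_lcs1[of z] unfolding hz_def by (rule bracket_lcs1_eq_0_if_ad_central)
  moreover have "br ?u (e 1) = - e n"
    using bracket_e1[of "n - 1"] bracket_antisym[of ?u "e 1"] n_ge_3 by simp
  moreover have "br ?u z = br ?u hz + br ?u (z - hz)"
    by (simp flip: bracket_add_right)
  ultimately show ?thesis
    unfolding hz_def by (simp add: bracket_bilinear)
qed

definition psi :: "'v \<Rightarrow> 'v" where
  "psi y = y + scale (coord 2 y) (e (n - 1)) + scale (coord 3 y) (e n)"

lemma psi_bracket: "psi (br y z) = br (psi y) (psi z)"
proof -
  let ?u = "e (n - 1)" and ?w = "br (e (n - 1)) (e 2)"
  have uz: "br ?u z = scale (- coord 1 z) (e n) + scale (coord 2 z) ?w"
    by (rule bracket_e_n_minus_1)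
  have yu: "br y ?u = scale (coord 1 y) (e n) - scale (coord 2 y) ?w"
    using bracket_antisym[of y ?u] bracket_e_n_minus_1[of y] by simp
  have "br (psi y) (psi z)
      = br y z + scale (coord 2 z) (br y ?u) + scale (coord 2 y) (br ?u z)"
    unfolding psi_def by (simp add: bracket_bilinear e_n_central)
  also have "\<dots> = br y z + scale (coord 1 y * coord 2 z - coord 2 y * coord 1 z) (e n)"
    unfolding uz yu by (simp add: algebra_simps)
  also have "\<dots> = psi (br y z)"
    unfolding psi_def by (simp add: coord_bracket_eq_0 coord3_bracket)
  finally show ?thesis ..
qed

lemma psi_eq_0_iff: "psi y = 0 \<longleftrightarrow> y = 0"
proof
  assume psi: "psi y = 0"
  have e_coords: "coord 2 (e (n - 1)) \<in> {0, 1}" "coord 2 (e n) = 0" "coord 3 (e n) \<in> {0, 1}"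
    using coord_e[of 2 "n - 1"] coord_e[of 2 n] coord_e[of 3 n] n_ge_3 by auto
  have "coord 2 y * (1 + coord 2 (e (n - 1))) = coord 2 (psi y)"
    unfolding psi_def using e_coords by (simp add: coord_add coord_scale algebra_simps)
  then have "coord 2 y = 0"
    using psi e_coords(1) by auto
  then have y: "y + scale (coord 3 y) (e n) = 0"
    using psi by (simp add: psi_def)
  have "coord 3 y * (1 + coord 3 (e n)) = coord 3 (y + scale (coord 3 y) (e n))"
    by (simp add: coord_add coord_scale algebra_simps)
  then have "coord 3 y = 0"
    using y e_coords(3) by auto
  then show "y = 0"
    using y by simp
qed (simp add: psi_def)

lemma lie_automorphism_psi: "lie_automorphism scale br psi"
proof -
  have lin: "Vector_Spaces.linear scale scale psi"
    unfolding psi_def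
    by (intro linear_plus_scale_functional linear_ident linear_coord)
  interpret vector_space_pair scale scale ..
  have "inj psi"
    using psi_eq_0_iff by (simp add: linear_inj_iff_eq_0[OF lin])
  then have "bij psi"
    using linear_inj_imp_surj[OF lin] by (simp add: bij_def)
  then show ?thesis
    using lin psi_bracket by (simp add: lie_automorphism_def)
qed

lemma local_automorphism_add_coord3_e_n:
  "local_automorphism scale br (\<lambda>x. x + scale (coord 3 x) (e n))"
proof -
  have "\<exists>\<Phi>. lie_automorphism scale br \<Phi> \<and> \<Phi> x = x + scale (coord 3 x) (e n)" for x
  proof (cases "\<exists>i \<in> {1, 2}. coord i x \<noteq> 0")
    case True
    then obtain i where i: "i \<in> {1, 2}" "coord i x \<noteq> 0" by blast
    let ?f = "\<lambda>y. coord 3 x / coord i x * coord i y"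
    have "Vector_Spaces.linear scale (*) ?f"
      using linear_coord[of i] by (simp add: Vector_Spaces.linear_iff coord_add coord_scale
          algebra_simps add_divide_distrib)
    moreover have "?f (e n) = 0"
      using coord_e[of i n] i n_ge_3 by auto
    ultimately have "lie_automorphism scale br (\<lambda>y. y + scale (?f y) (e n))"
      using i e_n_central coord_bracket_eq_0 by (intro lie_automorphism_central_transvection) auto
    then show ?thesis
      using i by auto
  next
    case False
    then show ?thesis
      using lie_automorphism_psi by (auto simp: psi_def)
  qed
  moreover have "Vector_Spaces.linear scale scale (\<lambda>x. x + scale (coord 3 x) (e n))"
    by (intro linear_plus_scale_functional linear_ident linear_coord)
  ultimately show ?thesis
    by (simp add: local_automorphism_def)
qed

lemma not_lie_automorphism_add_coord3_e_n:
  "\<not> lie_automorphism scale br (\<lambda>x. x + scale (coord 3 x) (e n))"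
proof
  let ?D = "\<lambda>x. x + scale (coord 3 x) (e n)"
  assume "lie_automorphism scale br ?D"
  then have "?D (br (e 1) (e 2)) = br (?D (e 1)) (?D (e 2))"
    unfolding lie_automorphism_def by blast
  then have "e 3 + scale (coord 3 (e 3)) (e n)
      = br (e 1 + scale (coord 3 (e 1)) (e n)) (e 2 + scale (coord 3 (e 2)) (e n))"
    by (simp only: bracket_e1_e2)
  moreover have "coord 3 (e 3) = 1" "coord 3 (e 1) = 0" "coord 3 (e 2) = 0"
    using coord_e n_ge_3 by auto
  moreover have "e n \<noteq> 0"
    using e_independent n_ge_3 dependent_zero by force
  ultimately show False
    using bracket_e1_e2 by simp
qed

end

theorem lemma4p3:
  fixes scale :: "complex \<Rightarrow> 'v::ab_group_add \<Rightarrow> 'v"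
    and br :: "'v \<Rightarrow> 'v \<Rightarrow> 'v"
    and e :: "nat \<Rightarrow> 'v"
    and n :: nat
  assumes fil: "filiform scale br n"
    and n3: "n \<ge> 3"
    and inj: "inj_on e {1..n}"
    and indep: "\<not> module.dependent scale (e ` {1..n})"
    and spans: "module.span scale (e ` {1..n}) = UNIV"
    and brk: "\<And>i. 2 \<le> i \<Longrightarrow> i \<le> n - 1 \<Longrightarrow> br (e 1) (e i) = e (i + 1)"
    and lcs_basis: "\<And>k. 1 \<le> k \<Longrightarrow> k \<le> n - 2 \<Longrightarrow>
                       \<not> module.dependent scale (e ` {k + 2..n}) \<and>
                       module.span scale (e ` {k + 2..n}) = lcs scale br k"
  shows "local_automorphism scale br
           (\<lambda>x. x + scale (module.representation scale (e ` {1..n}) x (e 3)) (e n))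
         \<and> \<not> lie_automorphism scale br
           (\<lambda>x. x + scale (module.representation scale (e ` {1..n}) x (e 3)) (e n))"
proof -
  interpret filiform_adapted_basis scale br e n
    using assms by unfold_locales auto
  show ?thesis
    using local_automorphism_add_coord3_e_n not_lie_automorphism_add_coord3_e_n
    unfolding coord_def by (rule conjI)
qed

end
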